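(* Let $k\in\mathbb{N}$. For purely even $k$-dimensional cubes $E,E'$ and a morphism $f\colon E\to E'$ given by the family $(f^\nu)$, let $E^-:=E$ and let $f^-\colon E^-\to E'^-$ be the morphism given by the family $(\mathrm{sgn}(\nu)f^\nu)$. Then $(\mathrm{id}_E)^-=\mathrm{id}_E$ and $(g\circ f)^-=g^-\circ f^-$ for all morphisms $f\colon E\to E'$, $g\colon E'\to E''$ of purely even $k$-dimensional cubes; hence ${}^-$ is a functor on the category of purely even $k$-dimensional cubes, which is inverse to itself and respects products.
   Context: $\mathcal{P}^k_+$: nonempty subsets of $\{1..k\}$; $\mathrm{Part}(I)$: set of partitions $\nu=\{\nu_1,\dots,\nu_\ell\}$ of $I$ into nonempty blocks, $\ell(\nu)=\ell$. A $k$-dimensional cube is a family $(E_I)_{I\in\mathcal{P}^k_+}$ of real vector spaces with total space $E=\bigoplus_IE_I$, written $v=\sum_Iv_I$; it is purely even if $E_I=\{0\}$ whenever $|I|$ is odd. A morphism of cubes $f\colon E\to E'$ is a map $\sum_Iv_I\mapsto\sum_I\sum_{\nu\in\mathrm{Part}(I)}f^\nu(v_{\nu_1},\dots,v_{\nu_{\ell(\nu)}})$ where each $f^\nu\colon E_{\nu_1}\times\dots\times E_{\nu_{\ell(\nu)}}\to E'_I$ is multilinear (blocks listed in lexicographic order, for sets compared as increasingly ordered tuples); composition is composition of maps, and products are $(E\times E')_I=E_I\times E'_I$. Sign of a partition $\nu$ of $I=\{i_1<\dots<i_s\}$: concatenate the elements of $\nu_1,\dots,\nu_\ell$ (each block in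 increasing order, blocks in lexicographic order) into a tuple, and $\mathrm{sgn}(\nu)$ is the sign of the permutation bringing this tuple to $(i_1,\dots,i_s)$. *)

theory Defs
  imports "HOL-Analysis.Analysis" "HOL-Combinatorics.Permutations" "HOL-Library.Disjoint_Sets"
    "HOL-Library.List_Lexorder"
begin

definition Pk :: "nat \<Rightarrow> nat set set" where
  "Pk k = {I. I \<noteq> {} \<and> I \<subseteq> {1..k}}"

definition Part :: "nat set \<Rightarrow> nat set set set" where
  "Part I = {\<nu>. partition_on I \<nu>}"

text \<open>Blocks as increasingly ordered tuples, listed in lexicographic order.\<close>
definition block_lists :: "nat set set \<Rightarrow> nat list list" where
  "block_lists \<nu> = sorted_list_of_set (sorted_list_of_set ` \<nu>)"

definition blocks :: "nat set set \<Rightarrow> nat set list" where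
  "blocks \<nu> = map set (block_lists \<nu>)"

definition psign :: "nat set set \<Rightarrow> int" where
  "psign \<nu> = sign (THE p. p permutes {..<length (concat (block_lists \<nu>))} \<and>
      permute_list p (concat (block_lists \<nu>)) = sorted_list_of_set (\<Union>\<nu>))"

text \<open>A k-dimensional cube: a family of real vector spaces E_I (here subspaces of a
  common real vector space), I in Pk k.\<close>
definition cube :: "nat \<Rightarrow> (nat set \<Rightarrow> 'a::real_vector set) \<Rightarrow> bool" where
  "cube k E \<longleftrightarrow> (\<forall>I\<in>Pk k. subspace (E I))"

definition purely_even :: "nat \<Rightarrow> (nat set \<Rightarrow> 'a::real_vector set) \<Rightarrow> bool" where
  "purely_even k E \<longleftrightarrow> cube k E \<and> (\<forall>I\<in>Pk k. odd (card I) \<longrightarrow> E I = {0})"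

text \<open>Total space: elements v = sum of v_I, represented as the function I \<mapsto> v_I.\<close>
definition total :: "nat \<Rightarrow> (nat set \<Rightarrow> 'a::real_vector set) \<Rightarrow> (nat set \<Rightarrow> 'a) set" where
  "total k E = {v. (\<forall>I\<in>Pk k. v I \<in> E I) \<and> (\<forall>I. I \<notin> Pk k \<longrightarrow> v I = 0)}"

definition prod_cube :: "(nat set \<Rightarrow> 'a set) \<Rightarrow> (nat set \<Rightarrow> 'b set) \<Rightarrow> nat set \<Rightarrow> ('a \<times> 'b) set" where
  "prod_cube E E' = (\<lambda>I. E I \<times> E' I)"

text \<open>Multilinear maps E_1 \<times> ... \<times> E_l \<rightarrow> T, arguments given as a list.\<close>
definition multilinear_on :: "'a::real_vector set list \<Rightarrow> 'b::real_vector set \<Rightarrow> ('a list \<Rightarrow> 'b) \<Rightarrow> bool" where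
  "multilinear_on Es T f \<longleftrightarrow>
     (\<forall>xs. length xs = length Es \<and> (\<forall>i<length Es. xs ! i \<in> Es ! i) \<longrightarrow>
        f xs \<in> T \<and>
        (\<forall>i<length Es. \<forall>y\<in>Es ! i. \<forall>z\<in>Es ! i. \<forall>a b.
           f (xs[i := a *\<^sub>R y + b *\<^sub>R z]) = a *\<^sub>R f (xs[i := y]) + b *\<^sub>R f (xs[i := z])))"

definition mor :: "nat \<Rightarrow> (nat set \<Rightarrow> 'a::real_vector set) \<Rightarrow> (nat set \<Rightarrow> 'b::real_vector set)
    \<Rightarrow> (nat set set \<Rightarrow> 'a list \<Rightarrow> 'b) \<Rightarrow> bool" where
  "mor k E E' F \<longleftrightarrow> (\<forall>I\<in>Pk k. \<forall>\<nu>\<in>Part I. multilinear_on (map E (blocks \<nu>)) (E' I) (F \<nu>))"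

definition mor_app :: "nat \<Rightarrow> (nat set set \<Rightarrow> 'a list \<Rightarrow> 'b::real_vector)
    \<Rightarrow> (nat set \<Rightarrow> 'a) \<Rightarrow> nat set \<Rightarrow> 'b" where
  "mor_app k F v = (\<lambda>I. if I \<in> Pk k then (\<Sum>\<nu>\<in>Part I. F \<nu> (map v (blocks \<nu>))) else 0)"

definition msign :: "(nat set set \<Rightarrow> 'a list \<Rightarrow> 'b::real_vector) \<Rightarrow> nat set set \<Rightarrow> 'a list \<Rightarrow> 'b" where
  "msign F = (\<lambda>\<nu> xs. of_int (psign \<nu>) *\<^sub>R F \<nu> xs)"

end

theory Submission
  imports Defs
begin

text \<open>
  Write \<open>v|\<^sub>\<mu>\<close> (\<open>restr_vec \<mu> v\<close>) for the vector keeping only the components of \<open>v\<close> indexed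
  by blocks of the partition \<open>\<mu>\<close>. Multilinearity of the \<open>f\<^sup>\<nu>\<close> gives
  \<open>f\<^sup>-(v)\<^sub>I = \<Sum>\<^sub>\<mu> sgn(\<mu>) f(v|\<^sub>\<mu>)\<^sub>I\<close>, so \<open>f\<^sup>-\<close> only depends on the map of total spaces
  defined by \<open>f\<close>; for identities, projections and pairings only \<open>\<mu> = {I}\<close> contributes.

  For a composite, the \<open>\<nu>\<close>-term of \<open>(g \<circ> f)(v|\<^sub>\<mu>)\<^sub>I\<close> vanishes unless \<open>\<mu>\<close> refines \<open>\<nu>\<close>, i.e. is
  glued from partitions \<open>\<sigma>\<^sub>i\<close> of the blocks \<open>\<nu>\<^sub>i\<close>. Expanding \<open>g\<^sup>\<nu>(f\<^sup>-(v)\<^sub>\<nu>\<^sub>1, \<dots>)\<close> multilinearly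
  produces the same terms with coefficient \<open>sgn(\<nu>) \<Prod>\<^sub>i sgn(\<sigma>\<^sub>i)\<close>. This equals \<open>sgn(\<mu>)\<close> when all
  blocks of \<open>\<mu>\<close> are even, because then reordering whole blocks costs no sign; otherwise the term
  vanishes since \<open>E\<close> is purely even. Finally \<open>(f\<^sup>-)\<^sup>- = f\<close> as \<open>sgn(\<nu>)\<^sup>2 = 1\<close>.
\<close>

section \<open>Signs of rearrangements of lists\<close>

definition list_perm_sign :: "'a list \<Rightarrow> 'a list \<Rightarrow> int" where
  "list_perm_sign xs ys = sign (THE p. p permutes {..<length xs} \<and> permute_list p xs = ys)"

lemma psign_eq_list_perm_sign:
  "psign \<nu> = list_perm_sign (concat (block_lists \<nu>)) (sorted_list_of_set (\<Union>\<nu>))"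
  by (simp add: psign_def list_perm_sign_def)

lemma permutes_eq_if_permute_list_eq:
  assumes "distinct xs" "p permutes {..<length xs}" "q permutes {..<length xs}"
    "permute_list p xs = permute_list q xs"
  shows "p = q"
proof
  fix i show "p i = q i"
  proof (cases "i < length xs")
    case True
    have "xs ! p i = xs ! q i"
      using arg_cong[OF assms(4), of "\<lambda>ys. ys ! i"] permute_list_nth assms(2,3) True by metis
    moreover have "p i < length xs" "q i < length xs"
      using permutes_in_image[OF assms(2)] permutes_in_image[OF assms(3)] True by auto
    ultimately show ?thesis using assms(1) nth_eq_iff_index_eq by blast
  next
    case False
    thus ?thesis using permutes_not_in[OF assms(2)] permutes_not_in[OF assms(3)] by auto
  qed
qed

lemma list_perm_sign_eq:
  assumes "distinct xs" "p permutes {..<length xs}" "permute_list p xs = ys"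
  shows "list_perm_sign xs ys = sign p"
proof -
  have "(THE p. p permutes {..<length xs} \<and> permute_list p xs = ys) = p"
    by (rule the_equality) (use assms permutes_eq_if_permute_list_eq in auto)
  thus ?thesis by (simp add: list_perm_sign_def)
qed

lemma list_perm_sign_cases: "list_perm_sign xs ys = 1 \<or> list_perm_sign xs ys = -1"
  by (simp add: list_perm_sign_def sign_def)

lemma list_perm_sign_refl: "distinct xs \<Longrightarrow> list_perm_sign xs xs = 1"
  using list_perm_sign_eq[of xs id xs] by (simp add: permutes_id)

lemma list_perm_sign_trans:
  assumes "distinct xs" "mset xs = mset ys" "mset ys = mset zs"
  shows "list_perm_sign xs zs = list_perm_sign xs ys * list_perm_sign ys zs"
proof -
  obtain p where p: "p permutes {..<length xs}" "permute_list p xs = ys"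
    using mset_eq_permutation[of ys xs] assms(2) by metis
  obtain q where q: "q permutes {..<length ys}" "permute_list q ys = zs"
    using mset_eq_permutation[of zs ys] assms(3) by metis
  have len: "length ys = length xs" using assms(2) mset_eq_length by metis
  have "p \<circ> q permutes {..<length xs}" using p q len permutes_compose by metis
  moreover have "permute_list (p \<circ> q) xs = zs" using permute_list_compose[of q xs p] p q len by simp
  ultimately have "list_perm_sign xs zs = sign (p \<circ> q)" using list_perm_sign_eq assms(1) by blast
  also have "\<dots> = sign p * sign q"
    by (rule sign_compose) (use p q permutation_permutes in auto)
  also have "sign p = list_perm_sign xs ys" using list_perm_sign_eq assms(1) p by metis
  also have "sign q = list_perm_sign ys zs"
    using list_perm_sign_eq assms(1,2) mset_eq_imp_distinct_iff q by metis
  finally show ?thesis .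
qed

lemma list_perm_sign_sym:
  assumes "distinct xs" "mset xs = mset ys"
  shows "list_perm_sign ys xs = list_perm_sign xs ys"
proof -
  have "list_perm_sign xs ys * list_perm_sign ys xs = 1"
    using list_perm_sign_trans[OF assms assms(2)[symmetric]] assms(1)
    by (simp add: list_perm_sign_refl)
  thus ?thesis using list_perm_sign_cases[of xs ys] list_perm_sign_cases[of ys xs] by auto
qed

lemma list_perm_sign_append_same_suffix:
  assumes "distinct (as @ bs)" "mset as = mset cs"
  shows "list_perm_sign (as @ bs) (cs @ bs) = list_perm_sign as cs"
proof -
  obtain p where p: "p permutes {..<length as}" "permute_list p as = cs"
    using mset_eq_permutation[of cs as] assms(2) by metis
  have p': "p permutes {..<length (as @ bs)}" using p(1) by (rule permutes_subset) auto
  have "permute_list p (as @ bs) = cs @ bs"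
  proof (rule nth_equalityI)
    fix i assume i: "i < length (permute_list p (as @ bs))"
    show "permute_list p (as @ bs) ! i = (cs @ bs) ! i"
    proof (cases "i < length as")
      case True
      have "p i < length as" using permutes_in_image[OF p(1)] True by auto
      thus ?thesis using True i p permute_list_nth[OF p'] permute_list_nth[OF p(1)]
        by (auto simp: nth_append)
    next
      case False
      hence "p i = i" using permutes_not_in[OF p(1)] by auto
      thus ?thesis using False i p permute_list_nth[OF p'] by (auto simp: nth_append)
    qed
  qed (simp flip: p(2))
  hence "list_perm_sign (as @ bs) (cs @ bs) = sign p" using list_perm_sign_eq assms(1) p' by blast
  moreover have "list_perm_sign as cs = sign p" using list_perm_sign_eq assms(1) p by auto
  ultimately show ?thesis by simp
qed

lemma list_perm_sign_append_same_prefix: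
  assumes "distinct (as @ bs)" "mset bs = mset ds"
  shows "list_perm_sign (as @ bs) (as @ ds) = list_perm_sign bs ds"
proof -
  obtain p where p: "p permutes {..<length bs}" "permute_list p bs = ds"
    using mset_eq_permutation[of ds bs] assms(2) by metis
  define f where "f = (\<lambda>i::nat. length as + i)"
  define q where "q = map_permutation {..<length bs} f p"
  have bij: "bij_betw f {..<length bs} {length as..<length as + length bs}"
    unfolding f_def by (rule bij_betwI[where g="\<lambda>i. i - length as"]) auto
  have inj: "inj_on f {..<length bs}" using bij bij_betw_imp_inj_on by blast
  have q1: "q permutes {length as..<length as + length bs}"
    unfolding q_def using map_permutation_permutes[OF bij p(1)] .
  have q': "q permutes {..<length (as @ bs)}" using q1 by (rule permutes_subset) auto
  have qa: "q (length as + j) = length as + p j" if "j < length bs" for j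
    using map_permutation_apply[OF inj, of j p] that unfolding q_def f_def by simp
  have "permute_list q (as @ bs) = as @ ds"
  proof (rule nth_equalityI)
    fix i assume i: "i < length (permute_list q (as @ bs))"
    show "permute_list q (as @ bs) ! i = (as @ ds) ! i"
    proof (cases "i < length as")
      case False
      then obtain j where j: "i = length as + j" "j < length bs" using i
        by (metis add_diff_inverse_nat length_append length_permute_list nat_add_left_cancel_less)
      have "p j < length bs" using permutes_in_image[OF p(1)] j by auto
      thus ?thesis using j qa permute_list_nth[OF q'] permute_list_nth[OF p(1)] i p(2)
        by (auto simp: nth_append)
    next
      case True
      hence "q i = i" using permutes_not_in[OF q1] by auto
      thus ?thesis using True i permute_list_nth[OF q'] by (auto simp: nth_append)
    qed
  qed (simp flip: p(2))
  hence "list_perm_sign (as @ bs) (as @ ds) = sign q" using list_perm_sign_eq assms(1) q' by blast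
  also have "sign q = sign p" unfolding q_def by (rule sign_map_permutation[OF inj p(1)]) auto
  also have "sign p = list_perm_sign bs ds" using list_perm_sign_eq[of bs p ds] assms(1) p by auto
  finally show ?thesis .
qed

lemma list_perm_sign_append:
  assumes "distinct (as @ bs)" "mset as = mset cs" "mset bs = mset ds"
  shows "list_perm_sign (as @ bs) (cs @ ds) = list_perm_sign as cs * list_perm_sign bs ds"
proof -
  have "distinct (cs @ bs)"
    using assms mset_eq_imp_distinct_iff[of "as @ bs" "cs @ bs"] by auto
  moreover have "list_perm_sign (as @ bs) (cs @ ds) =
      list_perm_sign (as @ bs) (cs @ bs) * list_perm_sign (cs @ bs) (cs @ ds)"
    by (rule list_perm_sign_trans) (use assms in auto)
  ultimately show ?thesis
    using list_perm_sign_append_same_suffix[OF assms(1,2)]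
      list_perm_sign_append_same_prefix[of cs bs ds] assms(3) by simp
qed

lemma list_perm_sign_rotate1:
  assumes "distinct (a # bs)"
  shows "list_perm_sign (a # bs) (bs @ [a]) = (-1) ^ length bs"
  using assms
proof (induction bs arbitrary: a)
  case Nil thus ?case by (simp add: list_perm_sign_refl)
next
  case (Cons b bs)
  have swap: "list_perm_sign [a, b] [b, a] = -1"
  proof -
    have t: "Transposition.transpose 0 1 permutes {..<length [a, b]}"
      by (rule permutes_swap_id) auto
    have "permute_list (Transposition.transpose 0 1) [a, b] = [b, a]"
      by (simp add: permute_list_def)
    thus ?thesis using list_perm_sign_eq[OF _ t] Cons.prems by (simp add: sign_swap_id)
  qed
  have "list_perm_sign (a # b # bs) (b # bs @ [a]) =
      list_perm_sign (a # b # bs) (b # a # bs) * list_perm_sign (b # a # bs) (b # bs @ [a])"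
    by (rule list_perm_sign_trans) (use Cons.prems in auto)
  also have "list_perm_sign (a # b # bs) (b # a # bs) = list_perm_sign [a, b] [b, a]"
    using list_perm_sign_append_same_suffix[of "[a, b]" bs "[b, a]"] Cons.prems by auto
  also have "list_perm_sign (b # a # bs) (b # bs @ [a]) = list_perm_sign (a # bs) (bs @ [a])"
    using list_perm_sign_append_same_prefix[of "[b]" "a # bs" "bs @ [a]"] Cons.prems by auto
  finally show ?case using swap Cons.IH[of a] Cons.prems by simp
qed

lemma list_perm_sign_append_swap:
  assumes "distinct (as @ bs)"
  shows "list_perm_sign (as @ bs) (bs @ as) = (-1) ^ (length as * length bs)"
  using assms
proof (induction as)
  case Nil thus ?case by (simp add: list_perm_sign_refl)
next
  case (Cons a as)
  have rot: "list_perm_sign (as @ [a]) (a # as) = (-1) ^ length as"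
    using list_perm_sign_sym[of "a # as" "as @ [a]"] list_perm_sign_rotate1[of a as] Cons.prems
    by auto
  have "list_perm_sign (a # as @ bs) (bs @ a # as) =
      list_perm_sign (a # as @ bs) (a # bs @ as) *
      (list_perm_sign (a # bs @ as) ((bs @ as) @ [a]) *
       list_perm_sign (bs @ as @ [a]) (bs @ a # as))"
    using list_perm_sign_trans[of "a # as @ bs" "a # bs @ as" "bs @ a # as"]
      list_perm_sign_trans[of "a # bs @ as" "(bs @ as) @ [a]" "bs @ a # as"] Cons.prems by auto
  also have "list_perm_sign (a # as @ bs) (a # bs @ as) = (-1) ^ (length as * length bs)"
    using list_perm_sign_append_same_prefix[of "[a]" "as @ bs" "bs @ as"] Cons by auto
  also have "list_perm_sign (a # bs @ as) ((bs @ as) @ [a]) = (-1) ^ (length bs + length as)"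
    using list_perm_sign_rotate1[of a "bs @ as"] Cons.prems by auto
  also have "list_perm_sign (bs @ as @ [a]) (bs @ a # as) = (-1) ^ length as"
    using list_perm_sign_append_same_prefix[of bs "as @ [a]" "a # as"] rot Cons.prems by auto
  also have "(-1) ^ (length as * length bs) * ((-1) ^ (length bs + length as) * (-1) ^ length as) =
      (-1) ^ (length as * length bs + length bs) * ((-1) ^ (2 * length as) :: int)"
    by (simp add: power_add mult_2 ac_simps)
  also have "\<dots> = (-1) ^ (length as * length bs + length bs)"
    by (simp add: power_mult)
  finally show ?case by (simp add: algebra_simps)
qed

lemma mset_concat_eq: "mset xss = mset yss \<Longrightarrow> mset (concat xss) = mset (concat yss)"
  by (simp add: mset_concat sum_mset_sum_list[symmetric])

lemma list_perm_sign_concat: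
  assumes "list_all2 (\<lambda>xs ys. mset xs = mset ys) xss yss" "distinct (concat xss)"
  shows "list_perm_sign (concat xss) (concat yss) =
    (\<Prod>i<length xss. list_perm_sign (xss ! i) (yss ! i))"
  using assms
proof (induction xss yss rule: list_all2_induct)
  case Nil thus ?case by (simp add: list_perm_sign_refl)
next
  case (Cons xs xss ys yss)
  have "mset (concat xss) = mset (concat yss)"
    using Cons.hyps(2) by (induction rule: list_all2_induct) auto
  hence "list_perm_sign (concat (xs # xss)) (concat (ys # yss)) =
      list_perm_sign xs ys * list_perm_sign (concat xss) (concat yss)"
    using list_perm_sign_append[of xs "concat xss" ys "concat yss"] Cons by simp
  thus ?case using Cons by (simp only: length_Cons prod.lessThan_Suc_shift) simp
qed

lemma list_perm_sign_concat_even_blocks: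
  assumes "distinct (concat xss)" "mset xss = mset yss" "\<forall>xs\<in>set xss. even (length xs)"
  shows "list_perm_sign (concat xss) (concat yss) = 1"
  using assms
proof (induction yss arbitrary: xss)
  case Nil thus ?case by (simp add: list_perm_sign_refl)
next
  case (Cons ys yss)
  have "ys \<in> set xss" using Cons.prems(2) by (metis list.set_intros(1) set_mset_mset)
  then obtain as bs where xss: "xss = as @ ys # bs" by (meson split_list)
  have d: "distinct (concat as @ ys @ concat bs)" using Cons.prems(1) xss by simp
  have m: "mset (as @ bs) = mset yss" using Cons.prems(2) xss by simp
  have "list_perm_sign (concat xss) (concat (ys # yss)) =
     list_perm_sign ((concat as @ ys) @ concat bs) ((ys @ concat as) @ concat bs) *
     list_perm_sign (ys @ concat (as @ bs)) (ys @ concat yss)"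
    using list_perm_sign_trans[of "(concat as @ ys) @ concat bs" "(ys @ concat as) @ concat bs"
        "ys @ concat yss"] d mset_concat_eq[OF m] xss by (simp add: ac_simps)
  also have "\<dots> = list_perm_sign (concat as @ ys) (ys @ concat as) *
      list_perm_sign (concat (as @ bs)) (concat yss)"
    using list_perm_sign_append_same_suffix[of "concat as @ ys" "concat bs" "ys @ concat as"]
      list_perm_sign_append_same_prefix[of ys "concat (as @ bs)" "concat yss"]
      mset_concat_eq[OF m] d by auto
  also have "list_perm_sign (concat as @ ys) (ys @ concat as) = 1"
    using list_perm_sign_append_swap[of "concat as" ys] Cons.prems(3) d xss
    by (simp add: Int_Un_distrib)
  also have "list_perm_sign (concat (as @ bs)) (concat yss) = 1"
    using Cons.IH[OF _ m] Cons.prems(3) d xss by auto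
  finally show ?case by simp
qed

lemma concat_concat: "concat (concat xsss) = concat (map concat xsss)"
  by (induction xsss) auto

lemma mset_concat_eq_if_list_all2:
  "list_all2 (\<lambda>xs ys. mset xs = mset ys) xss yss \<Longrightarrow> mset (concat xss) = mset (concat yss)"
  by (induction rule: list_all2_induct) auto

section \<open>Partitions and their block lists\<close>

lemma finite_Part: "finite I \<Longrightarrow> finite (Part I)"
  unfolding Part_def by (rule finitely_many_partition_on)

lemma Part_finite: "finite I \<Longrightarrow> \<nu> \<in> Part I \<Longrightarrow> finite \<nu>"
  unfolding Part_def using finite_elements by blast

lemma Part_blockD:
  assumes "\<nu> \<in> Part I" "B \<in> \<nu>"
  shows "B \<subseteq> I" "B \<noteq> {}"
  using assms partition_onD1 partition_onD3 unfolding Part_def by fastforce+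

lemma Part_block_finite: "finite I \<Longrightarrow> \<nu> \<in> Part I \<Longrightarrow> B \<in> \<nu> \<Longrightarrow> finite B"
  using Part_blockD(1) finite_subset by metis

lemma Part_disjoint: "\<nu> \<in> Part I \<Longrightarrow> disjoint \<nu>"
  unfolding Part_def using partition_onD2 by blast

lemma Union_Part: "\<nu> \<in> Part I \<Longrightarrow> \<Union>\<nu> = I"
  unfolding Part_def using partition_onD1 by blast

lemma singleton_in_Part: "I \<noteq> {} \<Longrightarrow> {I} \<in> Part I"
  unfolding Part_def using partition_on_space by blast

lemma Part_eq_singleton:
  assumes "\<mu> \<in> Part I" "I \<in> \<mu>"
  shows "\<mu> = {I}"
proof -
  have "B = I" if "B \<in> \<mu>" for B
  proof (rule ccontr)
    assume "B \<noteq> I"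
    hence "B \<inter> I = {}" using Part_disjoint[OF assms(1)] that assms(2) by (auto simp: disjoint_def)
    thus False using Part_blockD[OF assms(1) that] by blast
  qed
  thus ?thesis using assms(2) by blast
qed

lemma Part_eq_if_subset_disjoint:
  assumes "\<nu> \<in> Part J" "\<pi> \<in> Part J" "disjoint S" "\<nu> \<subseteq> S" "\<pi> \<subseteq> S"
  shows "\<nu> = \<pi>"
proof -
  have "\<alpha> \<subseteq> \<beta>" if ab: "\<alpha> \<in> Part J" "\<beta> \<in> Part J" "\<alpha> \<subseteq> S" "\<beta> \<subseteq> S" for \<alpha> \<beta>
  proof
    fix B assume B: "B \<in> \<alpha>"
    obtain x where x: "x \<in> B" using Part_blockD(2)[OF ab(1) B] by blast
    hence "x \<in> \<Union>\<beta>" using B Part_blockD(1)[OF ab(1)] Union_Part[OF ab(2)] by blast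
    then obtain C where "C \<in> \<beta>" "x \<in> C" by blast
    moreover have "B = C" using assms(3) B calculation x ab(3,4) by (auto simp: disjoint_def)
    ultimately show "B \<in> \<beta>" by simp
  qed
  thus ?thesis using assms by (simp add: subset_antisym)
qed

lemma set_block_lists:
  "finite \<nu> \<Longrightarrow> set (block_lists \<nu>) = sorted_list_of_set ` \<nu>"
  unfolding block_lists_def by simp

lemma distinct_block_lists: "distinct (block_lists \<nu>)"
  unfolding block_lists_def by simp

lemma length_blocks: "length (blocks \<nu>) = length (block_lists \<nu>)"
  by (simp add: blocks_def)

lemma set_concat_block_lists:
  "finite \<nu> \<Longrightarrow> \<forall>B\<in>\<nu>. finite B \<Longrightarrow> set (concat (block_lists \<nu>)) = \<Union>\<nu>"
  by (simp add: set_block_lists)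

lemma set_blocks: "finite \<nu> \<Longrightarrow> \<forall>B\<in>\<nu>. finite B \<Longrightarrow> set (blocks \<nu>) = \<nu>"
  by (simp add: blocks_def set_block_lists image_image)

lemma block_lists_nth:
  assumes "finite \<nu>" "\<forall>B\<in>\<nu>. finite B" "i < length (blocks \<nu>)"
  shows "block_lists \<nu> ! i = sorted_list_of_set (blocks \<nu> ! i)"
proof -
  have "block_lists \<nu> ! i \<in> sorted_list_of_set ` \<nu>"
    using assms nth_mem[of i "block_lists \<nu>"] by (simp add: set_block_lists length_blocks)
  thus ?thesis using assms(2,3) by (auto simp: blocks_def)
qed

lemma distinct_blocks: "finite \<nu> \<Longrightarrow> \<forall>B\<in>\<nu>. finite B \<Longrightarrow> distinct (blocks \<nu>)"
  using distinct_block_lists[of \<nu>]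
  by (auto simp: blocks_def distinct_map set_block_lists intro!: inj_onI)

lemma distinct_concat_block_lists:
  assumes "finite \<nu>" "\<forall>B\<in>\<nu>. finite B" "disjoint \<nu>"
  shows "distinct (concat (block_lists \<nu>))"
proof (rule distinct_concat)
  fix ys zs assume "ys \<in> set (block_lists \<nu>)" "zs \<in> set (block_lists \<nu>)" "ys \<noteq> zs"
  then obtain B C where "B \<in> \<nu>" "C \<in> \<nu>" "ys = sorted_list_of_set B" "zs = sorted_list_of_set C"
    using assms by (auto simp: set_block_lists)
  moreover have "B \<noteq> C" using calculation \<open>ys \<noteq> zs\<close> by blast
  ultimately show "set ys \<inter> set zs = {}" using assms by (auto simp: disjoint_def)
qed (use assms in \<open>auto simp: distinct_block_lists set_block_lists\<close>)

lemma mset_concat_block_lists: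
  assumes "finite J" "\<pi> \<in> Part J"
  shows "mset (concat (block_lists \<pi>)) = mset (sorted_list_of_set J)"
proof -
  have "finite \<pi>" "\<forall>B\<in>\<pi>. finite B"
    using Part_finite[OF assms] Part_block_finite[OF assms] by auto
  hence "distinct (concat (block_lists \<pi>))" "set (concat (block_lists \<pi>)) = J"
    using distinct_concat_block_lists set_concat_block_lists Part_disjoint[OF assms(2)]
      Union_Part[OF assms(2)] by auto
  thus ?thesis using assms(1) set_eq_iff_mset_eq_distinct
    by (metis distinct_sorted_list_of_set set_sorted_list_of_set)
qed

lemma psign_singleton: "finite I \<Longrightarrow> psign {I} = 1"
  by (simp add: psign_eq_list_perm_sign block_lists_def list_perm_sign_refl)

lemma psign_square: "psign \<nu> * psign \<nu> = 1"
  by (simp add: psign_def sign_def)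

section \<open>Refinements of a partition\<close>

definition block_partitions :: "nat set set \<Rightarrow> (nat \<Rightarrow> nat set set) set" where
  "block_partitions \<nu> = (\<Pi>\<^sub>E i\<in>{..<length (blocks \<nu>)}. Part (blocks \<nu> ! i))"

text \<open>\<open>refine \<nu> \<sigma>\<close> glues partitions \<open>\<sigma> i\<close> of the blocks of \<open>\<nu>\<close>; its image on
  \<open>block_partitions \<nu>\<close> consists of all partitions refining \<open>\<nu>\<close>.\<close>
definition refine :: "nat set set \<Rightarrow> (nat \<Rightarrow> nat set set) \<Rightarrow> nat set set" where
  "refine \<nu> \<sigma> = (\<Union>i<length (blocks \<nu>). \<sigma> i)"

lemma set_blocks_Part: "finite I \<Longrightarrow> \<nu> \<in> Part I \<Longrightarrow> set (blocks \<nu>) = \<nu>"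
  by (intro set_blocks Part_finite ballI) (auto intro: Part_block_finite)

lemma blocks_nth_in_Part:
  "finite I \<Longrightarrow> \<nu> \<in> Part I \<Longrightarrow> i < length (blocks \<nu>) \<Longrightarrow> blocks \<nu> ! i \<in> \<nu>"
  using set_blocks_Part nth_mem by metis

lemma blocks_nth_disjoint:
  assumes "finite I" "\<nu> \<in> Part I" "i < length (blocks \<nu>)" "j < length (blocks \<nu>)" "i \<noteq> j"
  shows "blocks \<nu> ! i \<inter> blocks \<nu> ! j = {}"
proof -
  have "distinct (blocks \<nu>)"
    using distinct_blocks Part_finite[OF assms(1,2)] Part_block_finite[OF assms(1,2)] by blast
  hence "blocks \<nu> ! i \<noteq> blocks \<nu> ! j" using assms(3-5) nth_eq_iff_index_eq by blast
  moreover have "blocks \<nu> ! i \<in> \<nu>" "blocks \<nu> ! j \<in> \<nu>"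
    using blocks_nth_in_Part assms by auto
  ultimately show ?thesis using Part_disjoint[OF assms(2)] by (auto simp: disjoint_def)
qed

context
  fixes I \<nu> \<sigma>
  assumes I: "finite I" and \<nu>: "\<nu> \<in> Part I" and \<sigma>: "\<sigma> \<in> block_partitions \<nu>"
begin

lemma block_partitions_nth: "i < length (blocks \<nu>) \<Longrightarrow> \<sigma> i \<in> Part (blocks \<nu> ! i)"
  using \<sigma> by (auto simp: block_partitions_def)

lemma refine_block_subset:
  assumes "i < length (blocks \<nu>)" "B \<in> \<sigma> i"
  shows "B \<subseteq> blocks \<nu> ! i" "B \<noteq> {}"
  using Part_blockD[OF block_partitions_nth] assms by auto

lemma refine_blocks_within:
  assumes "i < length (blocks \<nu>)"
  shows "{B \<in> refine \<nu> \<sigma>. B \<subseteq> blocks \<nu> ! i} = \<sigma> i"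
proof (intro equalityI subsetI)
  fix B assume "B \<in> {B \<in> refine \<nu> \<sigma>. B \<subseteq> blocks \<nu> ! i}"
  then obtain j where j: "j < length (blocks \<nu>)" "B \<in> \<sigma> j" and B: "B \<subseteq> blocks \<nu> ! i"
    by (auto simp: refine_def)
  have "i = j"
    using refine_block_subset[OF j] blocks_nth_disjoint[OF I \<nu> assms j(1)] B by blast
  thus "B \<in> \<sigma> i" using j by simp
qed (use assms refine_block_subset in \<open>auto simp: refine_def\<close>)

lemma refine_in_Part: "refine \<nu> \<sigma> \<in> Part I"
  unfolding Part_def mem_Collect_eq
proof (rule partition_onI)
  have "\<Union>(refine \<nu> \<sigma>) = (\<Union>i<length (blocks \<nu>). \<Union>(\<sigma> i))"
    by (auto simp: refine_def)
  also have "\<dots> = (\<Union>i<length (blocks \<nu>). blocks \<nu> ! i)"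
    using Union_Part[OF block_partitions_nth] by simp
  also have "\<dots> = \<Union>(set (blocks \<nu>))" unfolding set_conv_nth by blast
  finally show "\<Union>(refine \<nu> \<sigma>) = I" using set_blocks_Part[OF I \<nu>] Union_Part[OF \<nu>] by simp
  show "{} \<notin> refine \<nu> \<sigma>" using refine_block_subset(2) by (force simp: refine_def)
next
  fix B C assume "B \<in> refine \<nu> \<sigma>" "C \<in> refine \<nu> \<sigma>" "B \<noteq> C"
  then obtain i j where ij: "i < length (blocks \<nu>)" "j < length (blocks \<nu>)" "B \<in> \<sigma> i" "C \<in> \<sigma> j"
    by (auto simp: refine_def)
  show "disjnt B C"
  proof (cases "i = j")
    case True
    thus ?thesis using Part_disjoint[OF block_partitions_nth] ij \<open>B \<noteq> C\<close>
      by (auto simp: disjoint_def disjnt_def)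
  next
    case False
    thus ?thesis using blocks_nth_disjoint[OF I \<nu> ij(1,2)] refine_block_subset ij
      by (auto simp: disjnt_def)
  qed
qed

lemma mset_concat_block_lists_block_partitions:
  "list_all2 (\<lambda>xs ys. mset xs = mset ys)
    (map (\<lambda>i. concat (block_lists (\<sigma> i))) [0..<length (blocks \<nu>)]) (block_lists \<nu>)"
proof (rule list_all2_all_nthI)
  fix i assume "i < length (map (\<lambda>i. concat (block_lists (\<sigma> i))) [0..<length (blocks \<nu>)])"
  hence i: "i < length (blocks \<nu>)" by simp
  have fin: "finite (blocks \<nu> ! i)" using Part_block_finite[OF I \<nu> blocks_nth_in_Part[OF I \<nu> i]] .
  show "mset (map (\<lambda>i. concat (block_lists (\<sigma> i))) [0..<length (blocks \<nu>)] ! i) =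
      mset (block_lists \<nu> ! i)"
    using mset_concat_block_lists[OF fin block_partitions_nth[OF i]] i
      block_lists_nth[OF Part_finite[OF I \<nu>]] Part_block_finite[OF I \<nu>] by simp
qed (simp add: length_blocks)

lemma mset_block_lists_refine:
  "mset (block_lists (refine \<nu> \<sigma>)) = mset (concat (map (\<lambda>i. block_lists (\<sigma> i)) [0..<length (blocks \<nu>)]))"
proof -
  define Ls where "Ls = map (\<lambda>i. block_lists (\<sigma> i)) [0..<length (blocks \<nu>)]"
  have "distinct (concat (block_lists \<nu>))"
    using distinct_concat_block_lists Part_finite[OF I \<nu>] Part_block_finite[OF I \<nu>]
      Part_disjoint[OF \<nu>] by blast
  moreover have "map concat Ls = map (\<lambda>i. concat (block_lists (\<sigma> i))) [0..<length (blocks \<nu>)]"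
    by (simp add: Ls_def)
  ultimately have flat: "distinct (concat (map concat Ls))"
    using mset_concat_eq_if_list_all2[OF mset_concat_block_lists_block_partitions]
      mset_eq_imp_distinct_iff by metis
  have fin: "finite (\<sigma> i)" "\<forall>B\<in>\<sigma> i. finite B" if "i < length (blocks \<nu>)" for i
    using Part_finite[OF _ block_partitions_nth[OF that]]
      Part_block_finite[OF _ block_partitions_nth[OF that]]
      Part_block_finite[OF I \<nu> blocks_nth_in_Part[OF I \<nu> that]] by auto
  have "sorted_list_of_set B \<noteq> []" if "i < length (blocks \<nu>)" "B \<in> \<sigma> i" for i B
    using refine_block_subset[OF that] fin(2)[OF that(1)] that(2) by simp
  hence "[] \<notin> set (concat Ls)" using fin(1) by (force simp: Ls_def set_block_lists)
  hence "distinct (concat Ls)"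
    using flat[folded concat_concat, unfolded distinct_concat_iff] by (simp add: removeAll_id)
  moreover have "set (concat Ls) = sorted_list_of_set ` refine \<nu> \<sigma>"
    using fin(1) by (force simp: Ls_def refine_def set_block_lists)
  moreover have "finite (refine \<nu> \<sigma>)" using Part_finite[OF I refine_in_Part] .
  ultimately show ?thesis
    using distinct_block_lists set_eq_iff_mset_eq_distinct by (metis Ls_def set_block_lists)
qed

lemma list_perm_sign_sort_within_blocks:
  assumes "distinct (concat (map (\<lambda>i. concat (block_lists (\<sigma> i))) [0..<length (blocks \<nu>)]))"
  shows "list_perm_sign (concat (map (\<lambda>i. concat (block_lists (\<sigma> i))) [0..<length (blocks \<nu>)]))
      (concat (block_lists \<nu>)) = (\<Prod>i<length (blocks \<nu>). psign (\<sigma> i))"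
proof -
  have "list_perm_sign (concat (map (\<lambda>i. concat (block_lists (\<sigma> i))) [0..<length (blocks \<nu>)]))
      (concat (block_lists \<nu>)) =
      (\<Prod>i<length (blocks \<nu>). list_perm_sign (concat (block_lists (\<sigma> i))) (block_lists \<nu> ! i))"
    using list_perm_sign_concat[OF mset_concat_block_lists_block_partitions assms] by simp
  also have "\<dots> = (\<Prod>i<length (blocks \<nu>). psign (\<sigma> i))"
  proof (rule prod.cong[OF refl])
    fix i assume "i \<in> {..<length (blocks \<nu>)}"
    hence "block_lists \<nu> ! i = sorted_list_of_set (\<Union>(\<sigma> i))"
      using block_lists_nth[OF Part_finite[OF I \<nu>]] Part_block_finite[OF I \<nu>]
        Union_Part[OF block_partitions_nth] by simp
    thus "list_perm_sign (concat (block_lists (\<sigma> i))) (block_lists \<nu> ! i) = psign (\<sigma> i)"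
      by (simp only: psign_eq_list_perm_sign)
  qed
  finally show ?thesis .
qed

text \<open>Sort the concatenated blocks of the refinement in three stages: gather the blocks lying in
  each block of \<open>\<nu>\<close> (this moves only blocks of even length and costs no sign), sort within each
  block of \<open>\<nu>\<close> (giving the signs of the \<open>\<sigma> i\<close>), and sort across the blocks of \<open>\<nu>\<close>.\<close>
lemma psign_refine:
  assumes even: "\<forall>B\<in>refine \<nu> \<sigma>. even (card B)"
  shows "psign (refine \<nu> \<sigma>) = psign \<nu> * (\<Prod>i<length (blocks \<nu>). psign (\<sigma> i))"
proof -
  define Ls where "Ls = map (\<lambda>i. block_lists (\<sigma> i)) [0..<length (blocks \<nu>)]"
  define xs where "xs = concat (block_lists (refine \<nu> \<sigma>))"
  define zs where "zs = concat (map (\<lambda>i. concat (block_lists (\<sigma> i))) [0..<length (blocks \<nu>)])"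
  define ys where "ys = concat (block_lists \<nu>)"
  define s where "s = sorted_list_of_set I"
  have \<mu>: "refine \<nu> \<sigma> \<in> Part I" using refine_in_Part .
  have mL: "mset (block_lists (refine \<nu> \<sigma>)) = mset (concat Ls)"
    using mset_block_lists_refine by (simp add: Ls_def)
  have zs: "zs = concat (concat Ls)" by (simp add: zs_def Ls_def concat_concat comp_def)
  have mzy: "mset zs = mset ys"
    unfolding zs_def ys_def using mset_concat_eq_if_list_all2[OF mset_concat_block_lists_block_partitions] .
  have mxz: "mset xs = mset zs" unfolding xs_def zs using mset_concat_eq[OF mL] .
  have mys: "mset ys = mset s"
    unfolding ys_def s_def using mset_concat_block_lists[OF I \<nu>] .
  have dx: "distinct xs"
    unfolding xs_def using distinct_concat_block_lists Part_finite[OF I \<mu>]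
      Part_block_finite[OF I \<mu>] Part_disjoint[OF \<mu>] by blast
  have dz: "distinct zs" using dx mxz mset_eq_imp_distinct_iff by blast
  have "\<forall>l\<in>set (block_lists (refine \<nu> \<sigma>)). even (length l)"
    using even Part_finite[OF I \<mu>] by (simp add: set_block_lists)
  hence "list_perm_sign xs zs = 1"
    unfolding xs_def zs using list_perm_sign_concat_even_blocks[OF dx[unfolded xs_def] mL] by blast
  moreover have "list_perm_sign zs ys = (\<Prod>i<length (blocks \<nu>). psign (\<sigma> i))"
    unfolding zs_def ys_def using list_perm_sign_sort_within_blocks dz[unfolded zs_def] by blast
  moreover have "list_perm_sign ys s = psign \<nu>"
    unfolding ys_def s_def by (simp add: psign_eq_list_perm_sign Union_Part[OF \<nu>])
  moreover have "psign (refine \<nu> \<sigma>) = list_perm_sign xs zs * (list_perm_sign zs ys * list_perm_sign ys s)"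
    unfolding psign_eq_list_perm_sign Union_Part[OF \<mu>] xs_def[symmetric] s_def[symmetric]
    using list_perm_sign_trans[OF dx mxz, of s] list_perm_sign_trans[OF dz mzy mys] mzy mys by simp
  ultimately show ?thesis by simp
qed
end

lemma inj_on_refine:
  assumes "finite I" "\<nu> \<in> Part I"
  shows "inj_on (refine \<nu>) (block_partitions \<nu>)"
proof (rule inj_onI)
  fix \<sigma> \<tau> assume st: "\<sigma> \<in> block_partitions \<nu>" "\<tau> \<in> block_partitions \<nu>" "refine \<nu> \<sigma> = refine \<nu> \<tau>"
  show "\<sigma> = \<tau>"
    using refine_blocks_within[OF assms st(1)] refine_blocks_within[OF assms st(2)] st
    by (intro PiE_ext[of _ "{..<length (blocks \<nu>)}" "\<lambda>i. Part (blocks \<nu> ! i)"])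
      (auto simp: block_partitions_def)
qed

lemma Part_in_refine_image:
  assumes I: "finite I" and \<nu>: "\<nu> \<in> Part I" and \<mu>: "\<mu> \<in> Part I"
    and covered: "\<forall>i<length (blocks \<nu>). \<exists>\<pi>\<in>Part (blocks \<nu> ! i). \<pi> \<subseteq> \<mu>"
  shows "\<mu> \<in> refine \<nu> ` block_partitions \<nu>"
proof -
  define \<sigma> where "\<sigma> = (\<lambda>i\<in>{..<length (blocks \<nu>)}. SOME \<pi>. \<pi> \<in> Part (blocks \<nu> ! i) \<and> \<pi> \<subseteq> \<mu>)"
  have \<sigma>i: "\<sigma> i \<in> Part (blocks \<nu> ! i) \<and> \<sigma> i \<subseteq> \<mu>" if "i < length (blocks \<nu>)" for i
    using someI_ex[OF covered[rule_format, OF that, unfolded Bex_def]] that by (simp add: \<sigma>_def)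
  hence \<sigma>: "\<sigma> \<in> block_partitions \<nu>" by (auto simp: block_partitions_def \<sigma>_def)
  have "refine \<nu> \<sigma> \<subseteq> \<mu>" using \<sigma>i by (auto simp: refine_def)
  hence "refine \<nu> \<sigma> = \<mu>"
    using Part_eq_if_subset_disjoint[OF refine_in_Part[OF I \<nu> \<sigma>] \<mu> Part_disjoint[OF \<mu>]] by blast
  thus ?thesis using \<sigma> by blast
qed

section \<open>Multilinear maps\<close>

lemma multilinear_on_in:
  "multilinear_on Es T f \<Longrightarrow> length xs = length Es \<Longrightarrow> \<forall>i<length Es. xs ! i \<in> Es ! i \<Longrightarrow> f xs \<in> T"
  unfolding multilinear_on_def by blast

lemma multilinear_on_update:
  assumes "multilinear_on Es T f" "length xs = length Es" "\<forall>i<length Es. xs ! i \<in> Es ! i"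
    "i < length Es" "y \<in> Es ! i" "z \<in> Es ! i"
  shows "f (xs[i := a *\<^sub>R y + b *\<^sub>R z]) = a *\<^sub>R f (xs[i := y]) + b *\<^sub>R f (xs[i := z])"
  using assms unfolding multilinear_on_def by blast

lemma multilinear_on_zero_arg:
  assumes "multilinear_on Es T f" "length xs = length Es" "\<forall>i<length Es. xs ! i \<in> Es ! i"
    "i < length Es" "xs ! i = 0"
  shows "f xs = 0"
proof -
  have "xs ! i \<in> Es ! i" using assms(3,4) by blast
  hence "f (xs[i := 0]) = 0" using multilinear_on_update[OF assms(1-4), of "xs ! i" "xs ! i" 0 0] by simp
  thus ?thesis using assms(5) by (metis list_update_id)
qed

lemma multilinear_on_sum_arg:
  assumes ml: "multilinear_on Es T f" and xs: "length xs = length Es" "\<forall>i<length Es. xs ! i \<in> Es ! i"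
    and i: "i < length Es" "subspace (Es ! i)" and "finite A" "\<forall>a\<in>A. y a \<in> Es ! i"
  shows "f (xs[i := (\<Sum>a\<in>A. c a *\<^sub>R y a)]) = (\<Sum>a\<in>A. c a *\<^sub>R f (xs[i := y a]))"
  using assms(6,7)
proof (induction A rule: finite_induct)
  case empty
  have "\<forall>j<length Es. xs[i := 0] ! j \<in> Es ! j"
    using xs i(1) subspace_0[OF i(2)] by (auto simp: nth_list_update)
  thus ?case using multilinear_on_zero_arg[OF ml _ _ i(1), of "xs[i := 0]"] xs(1) i(1) by simp
next
  case (insert x F)
  have "(\<Sum>a\<in>F. c a *\<^sub>R y a) \<in> Es ! i"
    using insert.prems i(2) by (intro subspace_sum subspace_scale) auto
  moreover have "(\<Sum>a\<in>insert x F. c a *\<^sub>R y a) = c x *\<^sub>R y x + 1 *\<^sub>R (\<Sum>a\<in>F. c a *\<^sub>R y a)"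
    using insert by simp
  ultimately show ?case
    using multilinear_on_update[OF ml xs i(1), of "y x" "\<Sum>a\<in>F. c a *\<^sub>R y a" "c x" 1] insert by simp
qed

lemma sum_PiE_lessThan_Suc:
  "(\<Sum>\<tau>\<in>PiE {..<Suc m} A. g \<tau>) = (\<Sum>a\<in>A m. \<Sum>\<sigma>\<in>PiE {..<m} A. g (\<sigma>(m := a)))"
proof -
  have "(\<Sum>\<tau>\<in>PiE {..<Suc m} A. g \<tau>) = (\<Sum>(a, \<sigma>)\<in>A m \<times> PiE {..<m} A. g (\<sigma>(m := a)))"
  proof (rule sum.reindex_bij_witness[of _ "\<lambda>(a, \<sigma>). \<sigma>(m := a)" "\<lambda>\<tau>. (\<tau> m, \<tau>(m := undefined))"])
    fix p assume "p \<in> A m \<times> PiE {..<m} A"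
    moreover obtain a \<sigma> where "p = (a, \<sigma>)" by fastforce
    ultimately show "(case p of (a, \<sigma>) \<Rightarrow> \<sigma>(m := a)) \<in> PiE {..<Suc m} A"
      and "((case p of (a, \<sigma>) \<Rightarrow> \<sigma>(m := a)) m, (case p of (a, \<sigma>) \<Rightarrow> \<sigma>(m := a))(m := undefined)) = p"
      by (auto simp: PiE_iff extensional_def)
  qed (auto simp: PiE_iff extensional_def)
  thus ?thesis by (simp add: sum.cartesian_product)
qed

lemma prod_lessThan_Suc_fun_upd:
  "(\<Prod>i<Suc m. c i ((\<sigma>(m := a)) i)) = (\<Prod>i<m. c i (\<sigma> i)) * c m a"
proof -
  have "(\<Prod>i<m. c i ((\<sigma>(m := a)) i)) = (\<Prod>i<m. c i (\<sigma> i))" by (intro prod.cong) auto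
  thus ?thesis by (simp add: prod.lessThan_Suc)
qed

lemma multilinear_on_expand_prefix:
  assumes ml: "multilinear_on Es T f" and n: "n = length Es"
    and sub: "\<forall>i<n. subspace (Es ! i)" and fin: "\<forall>i<n. finite (A i)"
    and y: "\<forall>i<n. \<forall>a\<in>A i. y i a \<in> Es ! i"
    and "m \<le> n" "length zs = n" "\<forall>i<n. zs ! i \<in> Es ! i"
  shows "f (map (\<lambda>i. if i < m then (\<Sum>a\<in>A i. c i a *\<^sub>R y i a) else zs ! i) [0..<n]) =
    (\<Sum>\<sigma>\<in>PiE {..<m} A. (\<Prod>i<m. c i (\<sigma> i)) *\<^sub>R
      f (map (\<lambda>i. if i < m then y i (\<sigma> i) else zs ! i) [0..<n]))"
  using assms(6-8)
proof (induction m arbitrary: zs)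
  case 0
  thus ?case by (simp add: map_nth)
next
  case (Suc m)
  define S where "S = (\<Sum>a\<in>A m. c m a *\<^sub>R y m a)"
  define L where "L = (\<lambda>\<sigma>. map (\<lambda>i. if i < m then y i (\<sigma> i) else zs ! i) [0..<n])"
  have m: "m < n" using Suc by simp
  have "S \<in> Es ! m" unfolding S_def using sub y m by (intro subspace_sum subspace_scale) auto
  hence zs': "length (zs[m := S]) = n" "\<forall>i<n. zs[m := S] ! i \<in> Es ! i"
    using Suc.prems by (auto simp: nth_list_update)
  have L: "length (L \<sigma>) = length Es" "\<forall>i<length Es. L \<sigma> ! i \<in> Es ! i" if "\<sigma> \<in> PiE {..<m} A" for \<sigma>
    unfolding L_def using Suc.prems y that n by (auto simp: PiE_iff)
  have upd: "map (\<lambda>i. if i < m then y i (\<sigma> i) else zs[m := S] ! i) [0..<n] = (L \<sigma>)[m := S]" for \<sigma>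
    unfolding L_def using Suc.prems by (intro nth_equalityI) (auto simp: nth_list_update)
  have upd': "(L \<sigma>)[m := y m a] = map (\<lambda>i. if i < Suc m then y i ((\<sigma>(m := a)) i) else zs ! i) [0..<n]"
    for \<sigma> a
    unfolding L_def using Suc.prems by (intro nth_equalityI) (auto simp: nth_list_update)
  have shift: "map (\<lambda>i. if i < Suc m then (\<Sum>a\<in>A i. c i a *\<^sub>R y i a) else zs ! i) [0..<n] =
        map (\<lambda>i. if i < m then (\<Sum>a\<in>A i. c i a *\<^sub>R y i a) else zs[m := S] ! i) [0..<n]"
    unfolding S_def using Suc.prems by (intro map_cong) (auto simp: nth_list_update)
  have "f (map (\<lambda>i. if i < Suc m then (\<Sum>a\<in>A i. c i a *\<^sub>R y i a) else zs ! i) [0..<n]) =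
    (\<Sum>\<sigma>\<in>PiE {..<m} A. (\<Prod>i<m. c i (\<sigma> i)) *\<^sub>R f ((L \<sigma>)[m := S]))"
    unfolding shift upd[symmetric] using Suc.IH[OF _ zs'] Suc.prems(1) by simp
  also have "\<dots> = (\<Sum>\<sigma>\<in>PiE {..<m} A. \<Sum>a\<in>A m. ((\<Prod>i<m. c i (\<sigma> i)) * c m a) *\<^sub>R f ((L \<sigma>)[m := y m a]))"
  proof (rule sum.cong[OF refl])
    fix \<sigma> assume "\<sigma> \<in> PiE {..<m} A"
    hence "f ((L \<sigma>)[m := S]) = (\<Sum>a\<in>A m. c m a *\<^sub>R f ((L \<sigma>)[m := y m a]))"
      unfolding S_def using multilinear_on_sum_arg[OF ml L, of \<sigma> m "A m" "y m" "c m"] m n sub fin y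
      by auto
    thus "(\<Prod>i<m. c i (\<sigma> i)) *\<^sub>R f ((L \<sigma>)[m := S]) =
        (\<Sum>a\<in>A m. ((\<Prod>i<m. c i (\<sigma> i)) * c m a) *\<^sub>R f ((L \<sigma>)[m := y m a]))"
      by (simp add: scaleR_sum_right)
  qed
  also have "\<dots> = (\<Sum>\<tau>\<in>PiE {..<Suc m} A. (\<Prod>i<Suc m. c i (\<tau> i)) *\<^sub>R
        f (map (\<lambda>i. if i < Suc m then y i (\<tau> i) else zs ! i) [0..<n]))"
    unfolding sum_PiE_lessThan_Suc sum.swap[of _ "A m"] by (simp add: upd' prod_lessThan_Suc_fun_upd)
  finally show ?case .
qed

lemma multilinear_on_expand:
  assumes "multilinear_on Es T f" "n = length Es"
    "\<forall>i<n. subspace (Es ! i)" "\<forall>i<n. finite (A i)" "\<forall>i<n. \<forall>a\<in>A i. y i a \<in> Es ! i"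
  shows "f (map (\<lambda>i. \<Sum>a\<in>A i. c i a *\<^sub>R y i a) [0..<n]) =
    (\<Sum>\<sigma>\<in>PiE {..<n} A. (\<Prod>i<n. c i (\<sigma> i)) *\<^sub>R f (map (\<lambda>i. y i (\<sigma> i)) [0..<n]))"
proof -
  define zs where "zs = map (\<lambda>i. \<Sum>a\<in>A i. c i a *\<^sub>R y i a) [0..<n]"
  have zs: "length zs = n" "\<forall>i<n. zs ! i \<in> Es ! i"
    unfolding zs_def using assms(3,5) by (auto intro!: subspace_sum subspace_scale)
  have prefix_all: "\<And>g h. map (\<lambda>i. if i < n then g i else h i) [0..<n] = map g [0..<n]"
    by (intro map_cong) auto
  show ?thesis using multilinear_on_expand_prefix[OF assms order.refl zs, of c] unfolding prefix_all .
qed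

section \<open>Morphisms of cubes and the sign twist\<close>

lemma sum_eq_single:
  assumes "finite A" "x \<in> A" "\<forall>y\<in>A - {x}. g y = 0"
  shows "sum g A = g x"
  using sum.mono_neutral_right[of A "{x}" g] assms by simp

definition restr_vec :: "nat set set \<Rightarrow> (nat set \<Rightarrow> 'a::zero) \<Rightarrow> nat set \<Rightarrow> 'a" where
  "restr_vec S v = (\<lambda>J. if J \<in> S then v J else 0)"

lemma Pk_finite: "I \<in> Pk k \<Longrightarrow> finite I"
  unfolding Pk_def using finite_subset by blast

lemma Pk_nonempty: "I \<in> Pk k \<Longrightarrow> I \<noteq> {}"
  unfolding Pk_def by blast

lemma Part_block_in_Pk: "I \<in> Pk k \<Longrightarrow> \<nu> \<in> Part I \<Longrightarrow> B \<in> \<nu> \<Longrightarrow> B \<in> Pk k"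
  using Part_blockD[of \<nu> I B] unfolding Pk_def by auto

lemma blocks_nth_in_Pk:
  "I \<in> Pk k \<Longrightarrow> \<nu> \<in> Part I \<Longrightarrow> i < length (blocks \<nu>) \<Longrightarrow> blocks \<nu> ! i \<in> Pk k"
  using Part_block_in_Pk blocks_nth_in_Part Pk_finite by metis

lemma purely_even_cube: "purely_even k E \<Longrightarrow> cube k E"
  unfolding purely_even_def by blast

lemma cube_prod_cube: "cube k E \<Longrightarrow> cube k E' \<Longrightarrow> cube k (prod_cube E E')"
  unfolding cube_def prod_cube_def by (simp add: subspace_Times)

lemma total_in: "v \<in> total k E \<Longrightarrow> J \<in> Pk k \<Longrightarrow> v J \<in> E J"
  unfolding total_def by blast

lemma restr_vec_in_total: "cube k E \<Longrightarrow> v \<in> total k E \<Longrightarrow> restr_vec S v \<in> total k E"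
  unfolding total_def restr_vec_def cube_def using subspace_0 by fastforce

lemma mor_multilinear_on:
  "mor k E E' F \<Longrightarrow> I \<in> Pk k \<Longrightarrow> \<nu> \<in> Part I \<Longrightarrow> multilinear_on (map E (blocks \<nu>)) (E' I) (F \<nu>)"
  unfolding mor_def by blast

lemma mor_term_in:
  assumes "mor k E E' F" "I \<in> Pk k" "\<nu> \<in> Part I" "\<forall>B\<in>\<nu>. w B \<in> E B"
  shows "F \<nu> (map w (blocks \<nu>)) \<in> E' I"
  by (rule multilinear_on_in[OF mor_multilinear_on[OF assms(1-3)]])
    (use assms(4) blocks_nth_in_Part[OF Pk_finite[OF assms(2)] assms(3)] in auto)

lemma mor_term_zero:
  assumes "mor k E E' F" "I \<in> Pk k" "\<nu> \<in> Part I" "\<forall>B\<in>\<nu>. w B \<in> E B" "B \<in> \<nu>" "w B = 0"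
  shows "F \<nu> (map w (blocks \<nu>)) = 0"
proof -
  obtain i where i: "i < length (blocks \<nu>)" "blocks \<nu> ! i = B"
    using set_blocks_Part[OF Pk_finite[OF assms(2)] assms(3)] assms(5) by (metis in_set_conv_nth)
  show ?thesis
    by (rule multilinear_on_zero_arg[OF mor_multilinear_on[OF assms(1-3)], of _ i])
      (use i assms(4,6) blocks_nth_in_Part[OF Pk_finite[OF assms(2)] assms(3)] in auto)
qed

lemma mor_app_in_total:
  assumes "mor k E E' F" "cube k E'" "v \<in> total k E"
  shows "mor_app k F v \<in> total k E'"
  unfolding total_def mem_Collect_eq
proof (intro conjI ballI allI impI)
  fix I assume I: "I \<in> Pk k"
  have "F \<nu> (map v (blocks \<nu>)) \<in> E' I" if "\<nu> \<in> Part I" for \<nu>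
    using mor_term_in[OF assms(1) I that] total_in[OF assms(3)] Part_block_in_Pk[OF I that] by blast
  thus "mor_app k F v I \<in> E' I"
    using assms(2) I unfolding mor_app_def cube_def by (simp add: subspace_sum)
qed (simp add: mor_app_def)

text \<open>Since \<open>S\<close> is disjoint, \<open>\<pi>\<close> is the only partition of \<open>J\<close> with all blocks in \<open>S\<close>; every other
  partition has a block at which \<open>restr_vec S v\<close> vanishes.\<close>
lemma mor_app_restr_vec:
  assumes F: "mor k E E' F" and E: "cube k E" and v: "v \<in> total k E" and J: "J \<in> Pk k"
    and S: "disjoint S" and \<pi>: "\<pi> \<in> Part J" "\<pi> \<subseteq> S"
  shows "mor_app k F (restr_vec S v) J = F \<pi> (map v (blocks \<pi>))"
proof -
  have "mor_app k F (restr_vec S v) J = (\<Sum>\<rho>\<in>Part J. F \<rho> (map (restr_vec S v) (blocks \<rho>)))"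
    using J by (simp add: mor_app_def)
  also have "\<dots> = F \<pi> (map (restr_vec S v) (blocks \<pi>))"
  proof (rule sum_eq_single[OF finite_Part[OF Pk_finite[OF J]] \<pi>(1)], rule ballI)
    fix \<rho> assume \<rho>: "\<rho> \<in> Part J - {\<pi>}"
    then obtain B where "B \<in> \<rho>" "B \<notin> S"
      using Part_eq_if_subset_disjoint[OF _ \<pi>(1) S _ \<pi>(2)] by blast
    thus "F \<rho> (map (restr_vec S v) (blocks \<rho>)) = 0"
      using mor_term_zero[OF F J, of \<rho> "restr_vec S v" B] \<rho> restr_vec_in_total[OF E v]
        total_in Part_block_in_Pk[OF J] by (force simp: restr_vec_def)
  qed
  also have "map (restr_vec S v) (blocks \<pi>) = map v (blocks \<pi>)"
    using set_blocks_Part[OF Pk_finite[OF J] \<pi>(1)] \<pi>(2) by (auto simp: restr_vec_def)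
  finally show ?thesis .
qed

lemma mor_app_restr_vec_zero:
  assumes F: "mor k E E' F" and E: "cube k E" and v: "v \<in> total k E" and J: "J \<in> Pk k"
    and none: "\<not> (\<exists>\<pi>\<in>Part J. \<pi> \<subseteq> S)"
  shows "mor_app k F (restr_vec S v) J = 0"
  unfolding mor_app_def
proof (simp add: J, rule sum.neutral, rule ballI)
  fix \<rho> assume \<rho>: "\<rho> \<in> Part J"
  then obtain B where "B \<in> \<rho>" "B \<notin> S" using none by blast
  thus "F \<rho> (map (restr_vec S v) (blocks \<rho>)) = 0"
    using mor_term_zero[OF F J \<rho>, of "restr_vec S v" B] restr_vec_in_total[OF E v]
      total_in Part_block_in_Pk[OF J \<rho>] by (force simp: restr_vec_def)
qed

lemma mor_app_msign:
  assumes "mor k E E' F" "cube k E" "v \<in> total k E" "I \<in> Pk k"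
  shows "mor_app k (msign F) v I =
    (\<Sum>\<mu>\<in>Part I. of_int (psign \<mu>) *\<^sub>R mor_app k F (restr_vec \<mu> v) I)"
  using mor_app_restr_vec[OF assms _ _ order.refl] Part_disjoint assms(4)
  by (simp add: mor_app_def msign_def)

lemma sum_Part_restr_vec:
  fixes h :: "'a::zero \<Rightarrow> 'b::real_vector"
  assumes "I \<in> Pk k" "h 0 = 0"
  shows "(\<Sum>\<mu>\<in>Part I. of_int (psign \<mu>) *\<^sub>R h (restr_vec \<mu> v I)) = h (v I)"
proof -
  have "(\<Sum>\<mu>\<in>Part I. of_int (psign \<mu>) *\<^sub>R h (restr_vec \<mu> v I)) =
      of_int (psign {I}) *\<^sub>R h (restr_vec {I} v I)"
  proof (rule sum_eq_single[OF finite_Part[OF Pk_finite[OF assms(1)]]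
        singleton_in_Part[OF Pk_nonempty[OF assms(1)]]], rule ballI)
    fix \<mu> assume "\<mu> \<in> Part I - {{I}}"
    hence "I \<notin> \<mu>" using Part_eq_singleton by blast
    thus "of_int (psign \<mu>) *\<^sub>R h (restr_vec \<mu> v I) = 0" using assms(2) by (simp add: restr_vec_def)
  qed
  thus ?thesis using psign_singleton Pk_finite assms(1) by (simp add: restr_vec_def)
qed

lemma mor_app_msign_componentwise:
  fixes h :: "'a::real_vector \<Rightarrow> 'b::real_vector"
  assumes "cube k E" "mor k E E' P" "\<forall>v\<in>total k E. mor_app k P v = (\<lambda>I. h (v I))"
    "v \<in> total k E" "h 0 = 0"
  shows "mor_app k (msign P) v = (\<lambda>I. h (v I))"
proof
  fix I show "mor_app k (msign P) v I = h (v I)"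
  proof (cases "I \<in> Pk k")
    case True
    thus ?thesis
      using mor_app_msign[OF assms(2,1,4) True] assms(3) restr_vec_in_total[OF assms(1,4)]
        sum_Part_restr_vec[OF True, of h v] assms(5) by simp
  next
    case False
    thus ?thesis using assms(4,5) by (simp add: mor_app_def total_def)
  qed
qed

lemma mor_app_msign_pair:
  assumes "cube k E" "mor k E E' F" "mor k E E'' G" "mor k E (prod_cube E' E'') H"
    "\<forall>v\<in>total k E. mor_app k H v = (\<lambda>I. (mor_app k F v I, mor_app k G v I))" "v \<in> total k E"
  shows "mor_app k (msign H) v = (\<lambda>I. (mor_app k (msign F) v I, mor_app k (msign G) v I))"
proof
  fix I show "mor_app k (msign H) v I = (mor_app k (msign F) v I, mor_app k (msign G) v I)"
  proof (cases "I \<in> Pk k")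
    case True
    thus ?thesis
      using mor_app_msign[OF assms(4,1,6) True] mor_app_msign[OF assms(2,1,6) True]
        mor_app_msign[OF assms(3,1,6) True] assms(5) restr_vec_in_total[OF assms(1,6)]
      by (simp add: fst_sum snd_sum prod_eq_iff)
  next
    case False thus ?thesis by (simp add: mor_app_def zero_prod_def)
  qed
qed

lemma msign_msign: "msign (msign F) = F"
proof (intro ext)
  fix \<nu> xs
  have "real_of_int (psign \<nu>) * real_of_int (psign \<nu>) = 1"
    using psign_square[of \<nu>] by (metis of_int_1 of_int_mult)
  thus "msign (msign F) \<nu> xs = F \<nu> xs" by (simp add: msign_def)
qed

lemma mor_msign:
  assumes "cube k E'" "mor k E E' F"
  shows "mor k E E' (msign F)"
  unfolding mor_def
proof (intro ballI)
  fix I \<nu> assume I: "I \<in> Pk k" and \<nu>: "\<nu> \<in> Part I"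
  have ml: "multilinear_on (map E (blocks \<nu>)) (E' I) (F \<nu>)" using mor_multilinear_on[OF assms(2) I \<nu>] .
  have "subspace (E' I)" using assms(1) I unfolding cube_def by blast
  thus "multilinear_on (map E (blocks \<nu>)) (E' I) (msign F \<nu>)"
    unfolding multilinear_on_def msign_def
    using multilinear_on_in[OF ml] multilinear_on_update[OF ml]
    by (auto simp: subspace_scale scaleR_add_right mult.commute)
qed

section \<open>Compatibility with composition\<close>

context
  fixes k E E' E'' F G v I \<nu>
  assumes E: "purely_even k E" and E': "cube k E'"
    and F: "mor k E E' F" and G: "mor k E' E'' G" and v: "v \<in> total k E"
    and I: "I \<in> Pk k" and \<nu>: "\<nu> \<in> Part I"
begin

abbreviation refined_term :: "(nat \<Rightarrow> nat set set) \<Rightarrow> 'c" where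
  "refined_term \<sigma> \<equiv> G \<nu> (map (\<lambda>i. F (\<sigma> i) (map v (blocks (\<sigma> i)))) [0..<length (blocks \<nu>)])"

lemma G_msign_F_expand:
  "G \<nu> (map (mor_app k (msign F) v) (blocks \<nu>)) =
    (\<Sum>\<sigma>\<in>block_partitions \<nu>. (\<Prod>i<length (blocks \<nu>). of_int (psign (\<sigma> i))) *\<^sub>R refined_term \<sigma>)"
proof -
  have "map (mor_app k (msign F) v) (blocks \<nu>) = map (\<lambda>i. \<Sum>\<pi>\<in>Part (blocks \<nu> ! i).
      of_int (psign \<pi>) *\<^sub>R F \<pi> (map v (blocks \<pi>))) [0..<length (blocks \<nu>)]"
    by (rule nth_equalityI) (use blocks_nth_in_Pk[OF I \<nu>] in \<open>auto simp: mor_app_def msign_def\<close>)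
  also have "G \<nu> \<dots> = (\<Sum>\<sigma>\<in>block_partitions \<nu>.
      (\<Prod>i<length (blocks \<nu>). of_int (psign (\<sigma> i))) *\<^sub>R refined_term \<sigma>)"
    unfolding block_partitions_def
  proof (rule multilinear_on_expand[OF mor_multilinear_on[OF G I \<nu>]])
    show "\<forall>i<length (blocks \<nu>). subspace (map E' (blocks \<nu>) ! i)"
      using E' blocks_nth_in_Pk[OF I \<nu>] by (simp add: cube_def)
    show "\<forall>i<length (blocks \<nu>). finite (Part (blocks \<nu> ! i))"
      using finite_Part Pk_finite blocks_nth_in_Pk[OF I \<nu>] by blast
    show "\<forall>i<length (blocks \<nu>). \<forall>\<pi>\<in>Part (blocks \<nu> ! i).
        F \<pi> (map v (blocks \<pi>)) \<in> map E' (blocks \<nu>) ! i"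
      using mor_term_in[OF F blocks_nth_in_Pk[OF I \<nu>]] total_in[OF v] Part_block_in_Pk[OF blocks_nth_in_Pk[OF I \<nu>]] by simp
  qed simp
  finally show ?thesis .
qed

lemma F_restr_vec_refine:
  assumes \<sigma>: "\<sigma> \<in> block_partitions \<nu>"
  shows "map (mor_app k F (restr_vec (refine \<nu> \<sigma>) v)) (blocks \<nu>) =
    map (\<lambda>i. F (\<sigma> i) (map v (blocks (\<sigma> i)))) [0..<length (blocks \<nu>)]"
proof (rule nth_equalityI)
  fix i assume "i < length (map (mor_app k F (restr_vec (refine \<nu> \<sigma>) v)) (blocks \<nu>))"
  hence i: "i < length (blocks \<nu>)" by simp
  have "\<sigma> i \<subseteq> refine \<nu> \<sigma>" using i by (auto simp: refine_def)
  thus "map (mor_app k F (restr_vec (refine \<nu> \<sigma>) v)) (blocks \<nu>) ! i =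
      map (\<lambda>i. F (\<sigma> i) (map v (blocks (\<sigma> i)))) [0..<length (blocks \<nu>)] ! i"
    using mor_app_restr_vec[OF F purely_even_cube[OF E] v blocks_nth_in_Pk[OF I \<nu> i]
        Part_disjoint[OF refine_in_Part[OF Pk_finite[OF I] \<nu> \<sigma>]] block_partitions_nth[OF Pk_finite[OF I] \<nu> \<sigma> i]]
      i by simp
qed simp

text \<open>Some block of \<open>\<nu>\<close> is not a union of blocks of \<open>\<mu>\<close>, and the corresponding argument of
  \<open>G \<nu>\<close> vanishes.\<close>
lemma G_F_restr_vec_non_refinement:
  assumes \<mu>: "\<mu> \<in> Part I" "\<mu> \<notin> refine \<nu> ` block_partitions \<nu>"
  shows "G \<nu> (map (mor_app k F (restr_vec \<mu> v)) (blocks \<nu>)) = 0"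
proof -
  obtain i where i: "i < length (blocks \<nu>)" "\<not> (\<exists>\<pi>\<in>Part (blocks \<nu> ! i). \<pi> \<subseteq> \<mu>)"
    using Part_in_refine_image[OF Pk_finite[OF I] \<nu> \<mu>(1)] \<mu>(2) by blast
  have "\<forall>B\<in>\<nu>. mor_app k F (restr_vec \<mu> v) B \<in> E' B"
    using total_in[OF mor_app_in_total[OF F E' restr_vec_in_total[OF purely_even_cube[OF E] v]]]
      Part_block_in_Pk[OF I \<nu>] by blast
  thus ?thesis
    using mor_term_zero[OF G I \<nu> _ blocks_nth_in_Part[OF Pk_finite[OF I] \<nu> i(1)]]
      mor_app_restr_vec_zero[OF F purely_even_cube[OF E] v blocks_nth_in_Pk[OF I \<nu> i(1)] i(2)] by blast
qed

lemma refined_term_odd_block: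
  assumes \<sigma>: "\<sigma> \<in> block_partitions \<nu>" and B: "B \<in> refine \<nu> \<sigma>" "odd (card B)"
  shows "refined_term \<sigma> = 0"
proof -
  obtain i where i: "i < length (blocks \<nu>)" "B \<in> \<sigma> i" using B(1) by (auto simp: refine_def)
  note \<sigma>i = block_partitions_nth[OF Pk_finite[OF I] \<nu> \<sigma> i(1)]
  have "B \<in> Pk k" using Part_block_in_Pk[OF blocks_nth_in_Pk[OF I \<nu> i(1)] \<sigma>i i(2)] .
  hence "v B = 0" using E B(2) total_in[OF v] by (auto simp: purely_even_def)
  hence "F (\<sigma> i) (map v (blocks (\<sigma> i))) = 0"
    using mor_term_zero[OF F blocks_nth_in_Pk[OF I \<nu> i(1)] \<sigma>i _ i(2)] total_in[OF v]
      Part_block_in_Pk[OF blocks_nth_in_Pk[OF I \<nu> i(1)] \<sigma>i] by blast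
  moreover have "\<forall>j<length (blocks \<nu>). F (\<sigma> j) (map v (blocks (\<sigma> j))) \<in> E' (blocks \<nu> ! j)"
    using mor_term_in[OF F blocks_nth_in_Pk[OF I \<nu>] block_partitions_nth[OF Pk_finite[OF I] \<nu> \<sigma>]] total_in[OF v]
      Part_block_in_Pk[OF blocks_nth_in_Pk[OF I \<nu>] block_partitions_nth[OF Pk_finite[OF I] \<nu> \<sigma>]] by blast
  ultimately show ?thesis
    using multilinear_on_zero_arg[OF mor_multilinear_on[OF G I \<nu>], of _ i] i(1) by simp
qed

lemma sum_Part_G_F_restr_vec:
  "(\<Sum>\<mu>\<in>Part I. of_int (psign \<mu>) *\<^sub>R G \<nu> (map (mor_app k F (restr_vec \<mu> v)) (blocks \<nu>))) =
    of_int (psign \<nu>) *\<^sub>R G \<nu> (map (mor_app k (msign F) v) (blocks \<nu>))"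
proof -
  have fin: "finite I" using Pk_finite[OF I] .
  let ?T = "\<lambda>\<mu>. G \<nu> (map (mor_app k F (restr_vec \<mu> v)) (blocks \<nu>))"
  let ?c = "\<lambda>\<sigma>. \<Prod>i<length (blocks \<nu>). of_int (psign (\<sigma> i)) :: real"
  have "(\<Sum>\<mu>\<in>Part I. of_int (psign \<mu>) *\<^sub>R ?T \<mu>) =
      (\<Sum>\<mu>\<in>refine \<nu> ` block_partitions \<nu>. of_int (psign \<mu>) *\<^sub>R ?T \<mu>)"
    using finite_Part[OF fin] refine_in_Part[OF fin \<nu>] G_F_restr_vec_non_refinement
    by (intro sum.mono_neutral_right) auto
  also have "\<dots> = (\<Sum>\<sigma>\<in>block_partitions \<nu>. of_int (psign (refine \<nu> \<sigma>)) *\<^sub>R refined_term \<sigma>)"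
    by (simp add: sum.reindex[OF inj_on_refine[OF fin \<nu>]] F_restr_vec_refine)
  also have "\<dots> = (\<Sum>\<sigma>\<in>block_partitions \<nu>. (of_int (psign \<nu>) * ?c \<sigma>) *\<^sub>R refined_term \<sigma>)"
  proof (rule sum.cong[OF refl])
    fix \<sigma> assume \<sigma>: "\<sigma> \<in> block_partitions \<nu>"
    show "of_int (psign (refine \<nu> \<sigma>)) *\<^sub>R refined_term \<sigma> = (of_int (psign \<nu>) * ?c \<sigma>) *\<^sub>R refined_term \<sigma>"
    proof (cases "\<forall>B\<in>refine \<nu> \<sigma>. even (card B)")
      case True
      thus ?thesis using psign_refine[OF fin \<nu> \<sigma>] by simp
    next
      case False
      thus ?thesis using refined_term_odd_block[OF \<sigma>] by auto
    qed
  qed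
  also have "\<dots> = of_int (psign \<nu>) *\<^sub>R G \<nu> (map (mor_app k (msign F) v) (blocks \<nu>))"
    by (simp add: G_msign_F_expand scaleR_sum_right)
  finally show ?thesis .
qed

end

lemma mor_app_msign_comp:
  assumes E: "purely_even k E" and E': "cube k E'"
    and F: "mor k E E' F" and G: "mor k E' E'' G" and H: "mor k E E'' H"
    and comp: "\<forall>v\<in>total k E. mor_app k H v = mor_app k G (mor_app k F v)"
    and v: "v \<in> total k E"
  shows "mor_app k (msign H) v = mor_app k (msign G) (mor_app k (msign F) v)"
proof
  fix I
  show "mor_app k (msign H) v I = mor_app k (msign G) (mor_app k (msign F) v) I"
  proof (cases "I \<in> Pk k")
    case I: True
    have "mor_app k (msign H) v I =
        (\<Sum>\<mu>\<in>Part I. of_int (psign \<mu>) *\<^sub>R mor_app k G (mor_app k F (restr_vec \<mu> v)) I)"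
      using mor_app_msign[OF H purely_even_cube[OF E] v I] comp
        restr_vec_in_total[OF purely_even_cube[OF E] v] by simp
    also have "\<dots> = (\<Sum>\<mu>\<in>Part I. \<Sum>\<nu>\<in>Part I.
        of_int (psign \<mu>) *\<^sub>R G \<nu> (map (mor_app k F (restr_vec \<mu> v)) (blocks \<nu>)))"
      using I by (simp add: mor_app_def scaleR_sum_right)
    also have "\<dots> = (\<Sum>\<nu>\<in>Part I. \<Sum>\<mu>\<in>Part I.
        of_int (psign \<mu>) *\<^sub>R G \<nu> (map (mor_app k F (restr_vec \<mu> v)) (blocks \<nu>)))"
      by (rule sum.swap)
    also have "\<dots> = mor_app k (msign G) (mor_app k (msign F) v) I"
      using sum_Part_G_F_restr_vec[OF E E' F G v I] I by (simp add: mor_app_def msign_def)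
    finally show ?thesis .
  qed (simp add: mor_app_def)
qed

theorem mainTheorem19:
  fixes k :: nat
    and E :: "nat set \<Rightarrow> 'a::real_vector set"
    and E' :: "nat set \<Rightarrow> 'b::real_vector set"
    and E'' :: "nat set \<Rightarrow> 'c::real_vector set"
  assumes "purely_even k E" and "purely_even k E'" and "purely_even k E''"
  shows
    \<comment> \<open>(id_E)^- = id_E\<close>
    "(\<forall>Id. mor k E E Id \<longrightarrow> (\<forall>v\<in>total k E. mor_app k Id v = v) \<longrightarrow>
        (\<forall>v\<in>total k E. mor_app k (msign Id) v = v))
   \<comment> \<open>(g \<circ> f)^- = g^- \<circ> f^-\<close>
   \<and> (\<forall>F G H. mor k E E' F \<longrightarrow> mor k E' E'' G \<longrightarrow> mor k E E'' H \<longrightarrow>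
        (\<forall>v\<in>total k E. mor_app k H v = mor_app k G (mor_app k F v)) \<longrightarrow>
        (\<forall>v\<in>total k E. mor_app k (msign H) v = mor_app k (msign G) (mor_app k (msign F) v)))
   \<comment> \<open>f^- is a morphism and (f^-)^- = f\<close>
   \<and> (\<forall>F. mor k E E' F \<longrightarrow> mor k E E' (msign F) \<and>
        (\<forall>v\<in>total k E. mor_app k (msign (msign F)) v = mor_app k F v))
   \<comment> \<open>respects products: projections and pairings are preserved\<close>
   \<and> (\<forall>P. mor k (prod_cube E E') E P \<longrightarrow>
        (\<forall>v\<in>total k (prod_cube E E'). mor_app k P v = (\<lambda>I. fst (v I))) \<longrightarrow>
        (\<forall>v\<in>total k (prod_cube E E'). mor_app k (msign P) v = (\<lambda>I. fst (v I))))
   \<and> (\<forall>P. mor k (prod_cube E E') E' P \<longrightarrow>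
        (\<forall>v\<in>total k (prod_cube E E'). mor_app k P v = (\<lambda>I. snd (v I))) \<longrightarrow>
        (\<forall>v\<in>total k (prod_cube E E'). mor_app k (msign P) v = (\<lambda>I. snd (v I))))
   \<and> (\<forall>F G H. mor k E E' F \<longrightarrow> mor k E E'' G \<longrightarrow> mor k E (prod_cube E' E'') H \<longrightarrow>
        (\<forall>v\<in>total k E. mor_app k H v = (\<lambda>I. (mor_app k F v I, mor_app k G v I))) \<longrightarrow>
        (\<forall>v\<in>total k E. mor_app k (msign H) v =
            (\<lambda>I. (mor_app k (msign F) v I, mor_app k (msign G) v I))))"
proof -
  have E: "cube k E" and E': "cube k E'" using assms purely_even_cube by blast+
  have EE': "cube k (prod_cube E E')" using cube_prod_cube[OF E E'] .
  show ?thesis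
  proof (intro conjI allI impI ballI)
    fix Id v assume "mor k E E Id" "\<forall>v\<in>total k E. mor_app k Id v = v" "v \<in> total k E"
    thus "mor_app k (msign Id) v = v" using mor_app_msign_componentwise[OF E, of E Id id v] by simp
  next
    fix F G H v assume "mor k E E' F" "mor k E' E'' G" "mor k E E'' H"
      "\<forall>v\<in>total k E. mor_app k H v = mor_app k G (mor_app k F v)" "v \<in> total k E"
    thus "mor_app k (msign H) v = mor_app k (msign G) (mor_app k (msign F) v)"
      using mor_app_msign_comp[OF assms(1) E'] by blast
  next
    fix F assume "mor k E E' F"
    thus "mor k E E' (msign F)" using mor_msign[OF E'] by blast
  next
    fix F v show "mor_app k (msign (msign F)) v = mor_app k F v" by (simp add: msign_msign)
  next
    fix P v assume "mor k (prod_cube E E') E P"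
      "\<forall>v\<in>total k (prod_cube E E'). mor_app k P v = (\<lambda>I. fst (v I))" "v \<in> total k (prod_cube E E')"
    thus "mor_app k (msign P) v = (\<lambda>I. fst (v I))"
      using mor_app_msign_componentwise[OF EE', of E P fst v] by simp
  next
    fix P v assume "mor k (prod_cube E E') E' P"
      "\<forall>v\<in>total k (prod_cube E E'). mor_app k P v = (\<lambda>I. snd (v I))" "v \<in> total k (prod_cube E E')"
    thus "mor_app k (msign P) v = (\<lambda>I. snd (v I))"
      using mor_app_msign_componentwise[OF EE', of E' P snd v] by simp
  next
    fix F G H v assume "mor k E E' F" "mor k E E'' G" "mor k E (prod_cube E' E'') H"
      "\<forall>v\<in>total k E. mor_app k H v = (\<lambda>I. (mor_app k F v I, mor_app k G v I))" "v \<in> total k E"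
    thus "mor_app k (msign H) v = (\<lambda>I. (mor_app k (msign F) v I, mor_app k (msign G) v I))"
      using mor_app_msign_pair[OF E] by blast
  qed
qed

end
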